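(* For all $q\in Q$, $\overline p'(q)<0$.
   Context: Let $0<q_\ell<q_h<\infty$, $Q=[q_\ell,q_h]$, and let $c$ be a real number with $0<c<q_\ell$. Let $F$ be a probability distribution on $[0,1]$ with support $[0,1]$ admitting a twice continuously differentiable density $f:(0,1)\to\mathbb{R}_{>0}$. Define $r(v)=(1-F(v))/f(v)$ and $\psi(v)=v-r(v)$ on $(0,1)$, and assume $\psi'(v)>0$ whenever $\psi(v)>0$. For $q\in Q$, $p(q)$ is the unique maximizer over $p\in\mathbb{R}$ of $(p-c)\big(1-F(p/q)\big)$, and $\overline p(q)=p(q)/q$. *)

theory Defs
  imports "HOL-Analysis.Analysis"
begin

definition rfun :: "(real \<Rightarrow> real) \<Rightarrow> (real \<Rightarrow> real) \<Rightarrow> real \<Rightarrow> real" where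
  "rfun F f v = (1 - F v) / f v"

definition psi :: "(real \<Rightarrow> real) \<Rightarrow> (real \<Rightarrow> real) \<Rightarrow> real \<Rightarrow> real" where
  "psi F f v = v - rfun F f v"

definition profit :: "(real \<Rightarrow> real) \<Rightarrow> real \<Rightarrow> real \<Rightarrow> real \<Rightarrow> real" where
  "profit F c q p = (p - c) * (1 - F (p / q))"

definition popt :: "(real \<Rightarrow> real) \<Rightarrow> real \<Rightarrow> real \<Rightarrow> real" where
  "popt F c q = (THE p. \<forall>p'. profit F c q p' \<le> profit F c q p)"

definition pbar :: "(real \<Rightarrow> real) \<Rightarrow> real \<Rightarrow> real \<Rightarrow> real" where
  "pbar F c q = popt F c q / q"

end

theory Submission
  imports Defs
begin

text \<open>An optimal price lies strictly between c and q, where the first-order condition reads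
  psi(p/q) = c/q. Since psi is strictly increasing wherever it is positive, this determines
  pbar(q) = psi^-1(c/q) locally, and the inverse function rule gives
  pbar'(q) = -c / (q^2 psi'(pbar q)) < 0.\<close>

lemma DERIV_pos_where_pos_imp_increasing:
  fixes g g' :: "real \<Rightarrow> real"
  assumes der: "\<And>t. a < t \<Longrightarrow> t < b \<Longrightarrow> (g has_real_derivative g' t) (at t)"
    and pos: "\<And>t. a < t \<Longrightarrow> t < b \<Longrightarrow> 0 < g t \<Longrightarrow> 0 < g' t"
    and xy: "a < x" "x < y" "y < b" and gx: "0 < g x"
  shows "g x < g y"
proof (rule ccontr)
  assume not_less: "\<not> g x < g y"
  have "continuous_on {x..y} g"
    using xy by (intro continuous_at_imp_continuous_on ballI DERIV_isCont[OF der]) auto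
  then obtain m where m: "m \<in> {x..y}"
    and m_max: "\<And>t. t \<in> {x..y} \<Longrightarrow> g t \<le> g m"
    using continuous_attains_sup[of "{x..y}" g] xy by fastforce
  obtain d where d: "0 < d" "\<And>h. 0 < h \<Longrightarrow> h < d \<Longrightarrow> g x < g (x + h)"
    using DERIV_pos_inc_right[OF der pos] xy gx by (metis less_trans)
  define h where "h = min (d / 2) ((y - x) / 2)"
  have h: "0 < h" "h < d" "x + h < y"
    using d xy by (auto simp: h_def min_def field_simps)
  have "g x < g (x + h)"
    using d h by simp
  also have "\<dots> \<le> g m"
    using h by (intro m_max) simp
  finally have gm: "g x < g m" .
  with not_less m have m_inner: "x < m" "m < y"
    by (auto simp: order.order_iff_strict)
  have "g' m = 0"
  proof (rule DERIV_local_max)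
    show "(g has_real_derivative g' m) (at m)"
      using der m_inner xy by simp
    show "\<forall>t. \<bar>m - t\<bar> < min (m - x) (y - m) \<longrightarrow> g t \<le> g m"
      using m_max by (auto simp: abs_if)
  qed (use m_inner in simp)
  moreover have "0 < g' m"
    using pos m_inner xy gm gx by auto
  ultimately show False
    by simp
qed

lemma DERIV_pos_where_pos_imp_inj_on:
  fixes g g' :: "real \<Rightarrow> real"
  assumes "\<And>t. a < t \<Longrightarrow> t < b \<Longrightarrow> (g has_real_derivative g' t) (at t)"
    and "\<And>t. a < t \<Longrightarrow> t < b \<Longrightarrow> 0 < g t \<Longrightarrow> 0 < g' t"
  shows "inj_on g {t \<in> {a<..<b}. 0 < g t}"
proof (rule inj_onI)
  fix x y assume "x \<in> {t \<in> {a<..<b}. 0 < g t}" "y \<in> {t \<in> {a<..<b}. 0 < g t}" "g x = g y"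
  moreover have "g s < g t" if "a < s" "s < t" "t < b" "0 < g s" for s t
    by (rule DERIV_pos_where_pos_imp_increasing[OF assms that])
  ultimately show "x = y"
    by (cases x y rule: linorder_cases) fastforce+
qed

lemma DERIV_local_inverse_function:
  fixes g h :: "real \<Rightarrow> real"
  assumes left_inv: "\<forall>\<^sub>F z in nhds x. h (g z) = z \<and> isCont g z"
    and der: "(g has_real_derivative D) (at x)" and "D \<noteq> 0"
    and "a < g x" "g x < b" and right_inv: "\<And>y. a < y \<Longrightarrow> y < b \<Longrightarrow> g (h y) = y"
  shows "(h has_real_derivative inverse D) (at (g x))"
proof -
  obtain d where "0 < d" and d: "\<And>z. dist z x < d \<Longrightarrow> h (g z) = z \<and> isCont g z"
    using left_inv unfolding eventually_nhds_metric by blast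
  have "isCont h (g x)"
    by (rule isCont_inverse_function[of "d / 2"]) (use \<open>0 < d\<close> d in \<open>auto simp: dist_real_def\<close>)
  moreover have "h (g x) = x"
    using d \<open>0 < d\<close> by simp
  ultimately show ?thesis
    using DERIV_inverse_function[where f = g and g = h and x = "g x"] assms by simp
qed

locale value_distribution =
  fixes F f :: "real \<Rightarrow> real"
  assumes F_zero: "\<And>v. v \<le> 0 \<Longrightarrow> F v = 0"
    and F_one: "\<And>v. 1 \<le> v \<Longrightarrow> F v = 1"
    and F_continuous: "continuous_on UNIV F"
    and F_density: "\<And>v. 0 < v \<Longrightarrow> v < 1 \<Longrightarrow> (F has_real_derivative f v) (at v)"
    and f_pos: "\<And>v. 0 < v \<Longrightarrow> v < 1 \<Longrightarrow> 0 < f v"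
    and f_differentiable: "\<And>v. 0 < v \<Longrightarrow> v < 1 \<Longrightarrow> f differentiable (at v)"
    and psi_deriv_pos: "\<And>v. 0 < v \<Longrightarrow> v < 1 \<Longrightarrow> 0 < psi F f v \<Longrightarrow> 0 < deriv (psi F f) v"
begin

lemma F_strictly_between:
  assumes "0 < v" "v < 1"
  shows "0 < F v \<and> F v < 1"
proof -
  have inc: "F x < F y" if "0 \<le> x" "x < y" "y \<le> 1" for x y
  proof (rule DERIV_pos_imp_increasing_open[where f = F])
    fix t assume "x < t" "t < y"
    then show "\<exists>D. (F has_real_derivative D) (at t) \<and> 0 < D"
      using that F_density f_pos by (intro exI[of _ "f t"]) simp
  qed (use that in \<open>auto intro: continuous_on_subset[OF F_continuous]\<close>)
  show ?thesis
    using inc[of 0 v] inc[of v 1] assms F_zero F_one by simp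
qed

lemma F_le_one: "F v \<le> 1"
  using F_strictly_between[of v] F_one by (cases "v < 1"; cases "0 < v") (auto simp: F_zero)

lemma psi_less: "0 < v \<Longrightarrow> v < 1 \<Longrightarrow> psi F f v < v"
  using F_strictly_between f_pos by (simp add: psi_def rfun_def)

lemma psi_has_derivative:
  assumes "0 < v" "v < 1"
  shows "(psi F f has_real_derivative deriv (psi F f) v) (at v)"
proof -
  have "F differentiable (at v)"
    using F_density assms real_differentiable_def by blast
  moreover have "f differentiable (at v)" "f v \<noteq> 0"
    using f_differentiable f_pos assms by force+
  ultimately have "(\<lambda>v. v - (1 - F v) / f v) differentiable (at v)"
    by (intro differentiable_diff differentiable_divide differentiable_ident differentiable_const)
  then show ?thesis
    by (simp add: DERIV_deriv_iff_real_differentiable psi_def[abs_def] rfun_def)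
qed

lemma psi_inj_on_pos: "inj_on (psi F f) {v \<in> {0<..<1}. 0 < psi F f v}"
  by (rule DERIV_pos_where_pos_imp_inj_on[where g' = "deriv (psi F f)"])
     (simp_all add: psi_has_derivative psi_deriv_pos)

end

locale monopoly_pricing = value_distribution +
  fixes c :: real
  assumes cost_pos: "0 < c"
begin

lemma profit_pos_imp_price_between:
  assumes "c < q" "0 < profit F c q p"
  shows "c < p \<and> p < q"
proof -
  have "p < q"
  proof (rule ccontr)
    assume "\<not> p < q"
    then have "F (p / q) = 1"
      using assms cost_pos by (intro F_one) simp
    then show False
      using assms by (simp add: profit_def)
  qed
  moreover have "c < p"
    using assms F_le_one[of "p / q"] by (auto simp: profit_def zero_less_mult_iff)
  ultimately show ?thesis
    by simp
qed

lemma profit_maximizer_exists: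
  assumes "c < q"
  obtains p where "\<And>p'. profit F c q p' \<le> profit F c q p" "0 < profit F c q p"
proof -
  have "continuous_on {c..q} (profit F c q)"
    unfolding profit_def[abs_def] using assms cost_pos
    by (intro continuous_intros continuous_on_compose2[OF F_continuous]) auto
  then obtain p where p: "p \<in> {c..q}"
    "\<And>p'. p' \<in> {c..q} \<Longrightarrow> profit F c q p' \<le> profit F c q p"
    using continuous_attains_sup[of "{c..q}" "profit F c q"] assms by fastforce
  define m where "m = (c + q) / 2"
  have "0 < m / q" "m / q < 1"
    using assms cost_pos by (auto simp: m_def field_simps)
  then have "0 < profit F c q m"
    using F_strictly_between assms by (simp add: profit_def m_def)
  also have "\<dots> \<le> profit F c q p"
    using p assms by (simp add: m_def)
  finally have pos: "0 < profit F c q p" .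
  have "profit F c q p' \<le> profit F c q p" for p'
  proof (cases "0 < profit F c q p'")
    case True
    then show ?thesis
      using p(2) profit_pos_imp_price_between[OF assms True] by simp
  qed (use pos in simp)
  with pos show thesis
    using that by blast
qed

lemma profit_maximizer_psi:
  assumes q: "c < q" and max: "\<And>p'. profit F c q p' \<le> profit F c q p"
  shows "0 < p / q \<and> p / q < 1 \<and> psi F f (p / q) = c / q"
proof -
  obtain p0 where "0 < profit F c q p0"
    using profit_maximizer_exists[OF q] by blast
  then have p: "c < p" "p < q"
    using max[of p0] profit_pos_imp_price_between[OF q, of p] by auto
  define v where "v = p / q"
  have q0: "0 < q" and v: "0 < v" "v < 1"
    using p cost_pos by (auto simp: v_def field_simps)
  have "(F has_real_derivative f v) (at (p / q))"
    using F_density[OF v] by (simp add: v_def)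
  moreover have "((\<lambda>x. x / q) has_real_derivative 1 / q) (at p)"
    using q0 by (auto intro!: derivative_eq_intros)
  ultimately have dFq: "((\<lambda>x. F (x / q)) has_real_derivative f v * (1 / q)) (at p)"
    by (rule DERIV_chain2[where g = "\<lambda>x. x / q"])
  have "(profit F c q has_real_derivative (1 - F (p / q)) - (p - c) * (f v * (1 / q))) (at p)"
    unfolding profit_def[abs_def] by (rule derivative_eq_intros dFq | simp)+
  then have "(1 - F (p / q)) - (p - c) * (f v * (1 / q)) = 0"
    by (rule DERIV_local_max[of _ _ _ 1]) (use max in auto)
  then have "(1 - F v) / f v = (p - c) / q"
    using f_pos[OF v] q0 by (simp add: field_simps v_def)
  then show ?thesis
    using v q0 by (simp add: psi_def rfun_def v_def diff_divide_distrib)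
qed

lemma popt_eqI:
  assumes q: "c < q" and max: "\<And>p'. profit F c q p' \<le> profit F c q p"
  shows "popt F c q = p"
  unfolding popt_def
proof (rule the_equality)
  fix p1 assume "\<forall>p'. profit F c q p' \<le> profit F c q p1"
  then have "0 < p1 / q \<and> p1 / q < 1 \<and> psi F f (p1 / q) = c / q"
    by (intro profit_maximizer_psi[OF q]) blast
  moreover have "0 < p / q \<and> p / q < 1 \<and> psi F f (p / q) = c / q"
    using profit_maximizer_psi[OF q max] .
  ultimately have "p1 / q = p / q"
    using q cost_pos inj_onD[OF psi_inj_on_pos, of "p1 / q" "p / q"] by simp
  then show "p1 = p"
    using q cost_pos by simp
qed (use max in simp)

lemma pbar_psi:
  assumes "c < q"
  shows "0 < pbar F c q \<and> pbar F c q < 1 \<and> psi F f (pbar F c q) = c / q"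
proof -
  obtain p where max: "\<And>p'. profit F c q p' \<le> profit F c q p"
    using profit_maximizer_exists[OF assms] by blast
  then show ?thesis
    using profit_maximizer_psi[OF assms max] popt_eqI[OF assms max] by (simp add: pbar_def)
qed

lemma pbar_cost_div_psi:
  assumes "0 < v" "v < 1" "0 < psi F f v"
  shows "pbar F c (c / psi F f v) = v"
proof -
  have "psi F f v < 1"
    using psi_less[of v] assms by simp
  then have "c < c / psi F f v"
    using assms cost_pos by (simp add: field_simps)
  from pbar_psi[OF this] have "0 < pbar F c (c / psi F f v) \<and> pbar F c (c / psi F f v) < 1
      \<and> psi F f (pbar F c (c / psi F f v)) = psi F f v"
    using cost_pos by simp
  then show ?thesis
    using assms inj_onD[OF psi_inj_on_pos, of "pbar F c (c / psi F f v)" v] by simp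
qed

lemma pbar_has_derivative:
  assumes q: "c < q"
  shows "(pbar F c has_real_derivative - c / (q\<^sup>2 * deriv (psi F f) (pbar F c q))) (at q)"
proof -
  define v where "v = pbar F c q"
  define h where "h = (\<lambda>y. pbar F c (c / y))"
  have q0: "0 < q"
    using q cost_pos by simp
  have v: "0 < v" "v < 1" "psi F f v = c / q"
    using pbar_psi[OF q] by (simp_all add: v_def)
  then have psi_v: "0 < psi F f v"
    using q0 cost_pos by simp
  have "\<forall>\<^sub>F z in nhds v. z \<in> {0<..<1}"
    using v by (intro eventually_nhds_in_open) simp_all
  moreover have "\<forall>\<^sub>F z in nhds v. 0 < psi F f z"
    using DERIV_isCont[OF psi_has_derivative[OF v(1,2)]] psi_v
    by (intro order_tendstoD(1)) (simp_all add: isCont_def tendsto_at_iff_tendsto_nhds)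
  ultimately have "\<forall>\<^sub>F z in nhds v. h (psi F f z) = z \<and> isCont (psi F f) z"
    by eventually_elim
       (auto simp: h_def pbar_cost_div_psi intro: DERIV_isCont[OF psi_has_derivative])
  moreover have "psi F f (h y) = y" if "0 < y" "y < 1" for y
  proof -
    have "c < c / y"
      using that cost_pos by (simp add: field_simps)
    then show ?thesis
      using pbar_psi[of "c / y"] that cost_pos by (simp add: h_def)
  qed
  ultimately have "(h has_real_derivative inverse (deriv (psi F f) v)) (at (c / q))"
    using DERIV_local_inverse_function[OF _ psi_has_derivative[OF v(1,2)], of h 0 1]
          psi_deriv_pos[OF v(1,2) psi_v] v psi_v q q0
    by simp
  moreover have "((\<lambda>x. c / x) has_real_derivative - c / q\<^sup>2) (at q)"
    using q0 by (auto intro!: derivative_eq_intros simp: power2_eq_square)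
  ultimately have "((\<lambda>x. h (c / x)) has_real_derivative
      inverse (deriv (psi F f) v) * (- c / q\<^sup>2)) (at q)"
    by (rule DERIV_chain2[where g = "\<lambda>x. c / x"])
  moreover have "(\<lambda>x. h (c / x)) = pbar F c"
    using cost_pos by (simp add: h_def)
  ultimately show ?thesis
    by (simp add: v_def divide_simps ac_simps)
qed

end

theorem lemma1:
  fixes F f :: "real \<Rightarrow> real" and c ql qh :: real
  assumes Q: "0 < ql" "ql < qh"
    and c: "0 < c" "c < ql"
    and F_low: "\<forall>v\<le>0. F v = 0"
    and F_high: "\<forall>v\<ge>1. F v = 1"
    and F_cont: "continuous_on UNIV F"
    and F_dens: "\<forall>v\<in>{0<..<1}. (F has_real_derivative f v) (at v)"
    and f_pos: "\<forall>v\<in>{0<..<1}. f v > 0"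
    and f_C2: "\<exists>f1 f2. (\<forall>v\<in>{0<..<1}. (f has_real_derivative f1 v) (at v)
                                 \<and> (f1 has_real_derivative f2 v) (at v))
                     \<and> continuous_on {0<..<1} f2"
    and psi_mono: "\<forall>v\<in>{0<..<1}. psi F f v > 0 \<longrightarrow> deriv (psi F f) v > 0"
  shows "\<forall>q\<in>{ql..qh}. \<exists>D. (pbar F c has_real_derivative D) (at q within {ql..qh}) \<and> D < 0"
proof -
  have "f differentiable (at v)" if "0 < v" "v < 1" for v
    using f_C2 that real_differentiable_def by fastforce
  then interpret monopoly_pricing F f c
    using F_low F_high F_cont F_dens f_pos psi_mono c(1) by unfold_locales auto
  show ?thesis
  proof
    fix q assume "q \<in> {ql..qh}"
    then have q: "c < q"
      using c by simp
    then have "0 < deriv (psi F f) (pbar F c q)"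
      using pbar_psi[OF q] cost_pos by (intro psi_deriv_pos) simp_all
    then have "- c / (q\<^sup>2 * deriv (psi F f) (pbar F c q)) < 0"
      using q cost_pos by (simp add: divide_neg_pos)
    then show "\<exists>D. (pbar F c has_real_derivative D) (at q within {ql..qh}) \<and> D < 0"
      using has_field_derivative_at_within[OF pbar_has_derivative[OF q]] by blast
  qed
qed

end
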